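(* Let $F\subsetneq K$ be fields of characteristic $t$, with $F$ a proper nonempty subfield of $K$. Let $p(x)=\sum_{k=0}^{n}a_k x^k\in K[x]$ be non-constant with $a_n\neq 0$, and let $q(x)=\sum_{j=0}^{m}b_j x^j\in K[x]\setminus F[x]$ with $b_m\neq 0$. Suppose $a_n,b_m\in F$ and $b_j\notin F$ for some $j\geq 1$. If $t\nmid n$, then $p\circ q\notin F[x]$ and $D_F(p\circ q)=D_F(q)$.
   Context: For sets $F\subset K$ and $p(x)=\sum_{k=0}^{n}a_kx^k\in K[x]$ with $a_n\neq 0$, the $F$ deficit $D_F(p)$ is defined as follows: if $p\in K[x]\setminus F[x]$, then $D_F(p)=n-\max\{0\le k\le n: a_k\notin F\}$; if $p\in F[x]$, then $D_F(p)=n$. Here $F[x]$ denotes the set of polynomials with all coefficients in $F$. *)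

theory Defs
  imports "HOL-Computational_Algebra.Polynomial"
begin

definition is_subfield :: "'a::field set \<Rightarrow> bool" where
  "is_subfield F \<longleftrightarrow> 0 \<in> F \<and> 1 \<in> F \<and>
     (\<forall>x\<in>F. \<forall>y\<in>F. x + y \<in> F \<and> x * y \<in> F) \<and>
     (\<forall>x\<in>F. - x \<in> F) \<and> (\<forall>x\<in>F. x \<noteq> 0 \<longrightarrow> inverse x \<in> F)"

definition poly_over :: "'a::zero set \<Rightarrow> 'a poly set" where
  "poly_over F = {p. \<forall>i. coeff p i \<in> F}"

definition deficit :: "'a::zero set \<Rightarrow> 'a poly \<Rightarrow> nat" where
  "deficit F p = (if p \<in> poly_over F then degree p
     else degree p - Max {k. k \<le> degree p \<and> coeff p k \<notin> F})"

end

theory Submission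
  imports Defs
begin

text \<open>
  Let \<open>r\<close> be the largest index with \<open>b\<^sub>r \<notin> F\<close>; the hypotheses give \<open>1 \<le> r < m\<close>.
  Write \<open>q = h + g\<close> with \<open>h \<in> F[x]\<close> of degree \<open>m\<close> and \<open>deg g \<le> r\<close>. Above degree
  \<open>(n - 1) m\<close> the coefficients of \<open>p \<circ> q\<close> are those of \<open>a\<^sub>n q\<^sup>n\<close>, and
  \<open>q\<^sup>n - h\<^sup>n\<close> has degree at most \<open>(n - 1) m + r\<close> with top coefficient \<open>n b\<^sub>m\<^sup>n\<^sup>-\<^sup>1 b\<^sub>r\<close>.
  As \<open>h\<^sup>n \<in> F[x]\<close> and \<open>a\<^sub>n n b\<^sub>m\<^sup>n\<^sup>-\<^sup>1\<close> is a nonzero element of \<open>F\<close> (here \<open>t \<nmid> n\<close> is used),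
  the largest index of a coefficient of \<open>p \<circ> q\<close> outside \<open>F\<close> is \<open>(n - 1) m + r\<close>, so
  \<open>D\<^sub>F(p \<circ> q) = n m - (n - 1) m - r = m - r = D\<^sub>F(q)\<close>.
\<close>

lemma
  assumes "is_subfield F"
  shows subfield_zero: "0 \<in> F"
    and subfield_one: "1 \<in> F"
    and subfield_add: "x \<in> F \<Longrightarrow> y \<in> F \<Longrightarrow> x + y \<in> F"
    and subfield_mult: "x \<in> F \<Longrightarrow> y \<in> F \<Longrightarrow> x * y \<in> F"
    and subfield_uminus: "x \<in> F \<Longrightarrow> - x \<in> F"
    and subfield_inverse: "x \<in> F \<Longrightarrow> inverse x \<in> F"
  using assms by (auto simp: is_subfield_def)

lemma subfield_diff:
  assumes "is_subfield F" "x \<in> F" "y \<in> F"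
  shows "x - y \<in> F"
  using subfield_add[OF assms(1,2) subfield_uminus[OF assms(1,3)]] by simp

lemma subfield_sum:
  assumes "is_subfield F" "\<And>i. i \<in> A \<Longrightarrow> f i \<in> F"
  shows "sum f A \<in> F"
  using assms(2)
  by (induction A rule: infinite_finite_induct) (simp_all add: subfield_zero subfield_add assms(1))

lemma subfield_power:
  assumes "is_subfield F" "x \<in> F"
  shows "x ^ k \<in> F"
  by (induction k) (simp_all add: subfield_one subfield_mult assms)

lemma subfield_of_nat:
  assumes "is_subfield F"
  shows "of_nat k \<in> F"
  by (induction k) (simp_all add: subfield_zero subfield_one subfield_add assms)

lemma subfield_mult_cancel_left:
  assumes "is_subfield F" "c \<in> F" "c \<noteq> 0" "c * x \<in> F"
  shows "x \<in> F"
proof -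
  have "inverse c * (c * x) \<in> F"
    using assms by (simp add: subfield_mult subfield_inverse)
  then show ?thesis
    using assms(3) by (simp add: mult.assoc[symmetric])
qed

lemma poly_over_mult:
  assumes "is_subfield F" "p \<in> poly_over F" "q \<in> poly_over F"
  shows "p * q \<in> poly_over F"
  using assms by (auto simp: poly_over_def coeff_mult intro!: subfield_sum subfield_mult)

lemma poly_over_power:
  assumes "is_subfield F" "p \<in> poly_over F"
  shows "p ^ k \<in> poly_over F"
proof (induction k)
  case 0
  then show ?case
    using assms(1) by (simp add: poly_over_def subfield_zero subfield_one)
next
  case (Suc k)
  then show ?case
    using assms poly_over_mult by simp
qed

definition top_coeff_notin :: "'a::zero set \<Rightarrow> 'a poly \<Rightarrow> nat \<Rightarrow> bool" where
  "top_coeff_notin F p d \<longleftrightarrow> coeff p d \<notin> F \<and> (\<forall>i>d. coeff p i \<in> F)"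

lemma top_coeff_notin_le_degree:
  assumes "0 \<in> F" "top_coeff_notin F p d"
  shows "d \<le> degree p"
  using assms by (intro le_degree) (auto simp: top_coeff_notin_def)

lemma deficit_eq_if_top_coeff_notin:
  assumes "0 \<in> F" "top_coeff_notin F p d"
  shows "p \<notin> poly_over F" "deficit F p = degree p - d"
proof -
  show "p \<notin> poly_over F"
    using assms(2) by (auto simp: poly_over_def top_coeff_notin_def)
  have "Max {k. k \<le> degree p \<and> coeff p k \<notin> F} = d"
    using assms top_coeff_notin_le_degree[OF assms]
    by (intro Max_eqI) (auto simp: top_coeff_notin_def not_le[symmetric])
  then show "deficit F p = degree p - d"
    using \<open>p \<notin> poly_over F\<close> by (simp add: deficit_def)
qed

lemma top_coeff_notin_exists:
  assumes "0 \<in> F" "p \<notin> poly_over F"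
  obtains d where "top_coeff_notin F p d"
proof -
  define S where "S = {k. coeff p k \<notin> F}"
  have "S \<subseteq> {..degree p}"
    using assms(1) by (force simp: S_def intro: le_degree)
  then have "finite S"
    using finite_subset by blast
  moreover have "S \<noteq> {}"
    using assms(2) by (auto simp: S_def poly_over_def)
  ultimately have "Max S \<in> S" "\<And>i. i \<in> S \<Longrightarrow> i \<le> Max S"
    by simp_all
  then have "top_coeff_notin F p (Max S)"
    unfolding top_coeff_notin_def S_def by (metis mem_Collect_eq not_le)
  then show thesis
    by (rule that)
qed

lemma coeff_mult_degree_le_sum:
  fixes p q :: "'a::comm_semiring_0 poly"
  assumes "degree p \<le> m" "degree q \<le> n"
  shows "coeff (p * q) (m + n) = coeff p m * coeff q n"
proof (cases "degree p = m \<and> degree q = n")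
  case True
  then show ?thesis
    using coeff_mult_degree_sum[of p q] by simp
next
  case False
  then have "degree (p * q) < m + n"
    using assms degree_mult_le[of p q] by linarith
  then show ?thesis
    using False assms by (auto simp: coeff_eq_0)
qed

lemma coeff_power_degree_le:
  fixes p :: "'a::comm_semiring_1 poly"
  assumes "degree p \<le> m"
  shows "coeff (p ^ k) (k * m) = coeff p m ^ k"
proof (induction k)
  case (Suc k)
  have "degree (p ^ k) \<le> k * m"
    using order_trans[OF degree_power_le[of p k] mult_le_mono1[OF assms]]
    by (simp add: mult.commute)
  then show ?case
    using coeff_mult_degree_le_sum[OF assms] Suc.IH by simp
qed simp

lemma pcompose_monom: "pcompose (monom c n) q = smult c (q ^ n)"
  by (induction n) (simp_all add: monom_0 monom_Suc pcompose_pCons)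

lemma coeff_pcompose_above:
  fixes p q :: "'a::comm_ring_1 poly"
  assumes "(degree p - 1) * degree q < i"
  shows "coeff (pcompose p q) i = lead_coeff p * coeff (q ^ degree p) i"
proof -
  define p' where "p' = p - monom (lead_coeff p) (degree p)"
  have "degree p' \<le> degree p - 1"
    by (rule degree_le) (auto simp: p'_def coeff_monom coeff_eq_0)
  then have "degree (pcompose p' q) < i"
    using degree_pcompose_le[of p' q] mult_le_mono1 assms by (meson le_less_trans order_trans)
  moreover have "pcompose p q = smult (lead_coeff p) (q ^ degree p) + pcompose p' q"
    by (simp add: p'_def pcompose_diff pcompose_monom)
  ultimately show ?thesis
    by (simp add: coeff_eq_0)
qed

lemma power_add_minus_power:
  fixes h g :: "'a::comm_ring_1 poly" and n :: nat
  assumes "degree g \<le> r" "r < degree h"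
  shows "degree ((h + g) ^ n - h ^ n) \<le> (n - 1) * degree h + r"
    and "coeff ((h + g) ^ n - h ^ n) ((n - 1) * degree h + r)
           = of_nat n * lead_coeff h ^ (n - 1) * coeff g r"
proof -
  define m where "m = degree h"
  define s where "s = (\<Sum>i<n. h ^ (n - Suc i) * (h + g) ^ i)"
  have diff: "(h + g) ^ n - h ^ n = g * s" \<comment> \<open>each of the \<open>n\<close> summands of \<open>s\<close> has top term \<open>lead_coeff h ^ (n - 1)\<close>\<close>
    unfolding s_def by (simp add: power_diff_sumr2)
  have hg: "degree (h + g) = m" "coeff (h + g) m = lead_coeff h"
    using assms by (simp_all add: m_def degree_add_eq_left coeff_eq_0)
  have term_degree: "degree (h ^ (n - Suc i) * (h + g) ^ i) \<le> (n - 1) * m"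
    and term_coeff: "coeff (h ^ (n - Suc i) * (h + g) ^ i) ((n - 1) * m) = lead_coeff h ^ (n - 1)"
    if "i < n" for i
  proof -
    have split: "(n - 1) * m = (n - Suc i) * m + i * m"
      using that by (simp add: add_mult_distrib[symmetric])
    have deg_h: "degree (h ^ (n - Suc i)) \<le> (n - Suc i) * m"
      using degree_power_le[of h "n - Suc i"] by (simp add: m_def mult.commute)
    have deg_hg: "degree ((h + g) ^ i) \<le> i * m"
      using degree_power_le[of "h + g" i] by (simp add: hg(1) mult.commute)
    show "degree (h ^ (n - Suc i) * (h + g) ^ i) \<le> (n - 1) * m"
      unfolding split using degree_mult_le add_mono[OF deg_h deg_hg] by (rule order_trans)
    have "coeff (h ^ (n - Suc i) * (h + g) ^ i) ((n - 1) * m)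
        = lead_coeff h ^ (n - Suc i) * lead_coeff h ^ i"
      unfolding split coeff_mult_degree_le_sum[OF deg_h deg_hg]
      using coeff_power_degree_le[of h m] coeff_power_degree_le[of "h + g" m] hg
      by (simp add: m_def)
    then show "coeff (h ^ (n - Suc i) * (h + g) ^ i) ((n - 1) * m) = lead_coeff h ^ (n - 1)"
      using that by (simp add: power_add[symmetric])
  qed
  have deg_s: "degree s \<le> (n - 1) * m"
    unfolding s_def by (intro degree_sum_le term_degree) auto
  have "coeff s ((n - 1) * m) = (\<Sum>i<n. lead_coeff h ^ (n - 1))"
    unfolding s_def coeff_sum by (intro sum.cong refl term_coeff) simp
  then have "coeff s ((n - 1) * m) = of_nat n * lead_coeff h ^ (n - 1)"
    by simp
  moreover have "degree (g * s) \<le> r + (n - 1) * m"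
    using degree_mult_le[of g s] assms(1) deg_s by linarith
  ultimately show "degree ((h + g) ^ n - h ^ n) \<le> (n - 1) * degree h + r"
    and "coeff ((h + g) ^ n - h ^ n) ((n - 1) * degree h + r)
           = of_nat n * lead_coeff h ^ (n - 1) * coeff g r"
    unfolding diff m_def[symmetric] using coeff_mult_degree_le_sum[OF assms(1) deg_s]
    by (simp_all add: add.commute[of _ r] mult_ac)
qed

lemma poly_split_over_plus_low:
  fixes q :: "'a::ab_group_add poly"
  assumes "0 \<in> F" "\<And>i. r < i \<Longrightarrow> coeff q i \<in> F" "r < degree q"
  obtains h g where "q = h + g" "h \<in> poly_over F" "degree h = degree q"
    "lead_coeff h = lead_coeff q" "degree g \<le> r" "coeff g r = coeff q r"
proof
  define g where "g = poly_cutoff (Suc r) q"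
  have coeff_g: "coeff g i = (if i \<le> r then coeff q i else 0)" for i
    by (simp add: g_def coeff_poly_cutoff)
  have coeff_h: "coeff (q - g) i = (if i \<le> r then 0 else coeff q i)" for i
    by (simp add: coeff_g)
  show "q = (q - g) + g" "coeff g r = coeff q r"
    by (simp_all add: coeff_g)
  show "q - g \<in> poly_over F"
    unfolding poly_over_def mem_Collect_eq coeff_h using assms(1,2) by auto
  show "degree g \<le> r"
    by (rule degree_le) (simp add: coeff_g)
  have "coeff (q - g) (degree q) = lead_coeff q"
    using assms(3) by (simp add: coeff_h del: coeff_diff)
  moreover have "degree (q - g) = degree q"
  proof (rule antisym)
    show "degree (q - g) \<le> degree q"
      by (rule degree_le) (simp add: coeff_h coeff_eq_0 del: coeff_diff)
    show "degree q \<le> degree (q - g)"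
      using assms(3) by (intro le_degree) (auto simp: coeff_h simp del: coeff_diff)
  qed
  ultimately show "degree (q - g) = degree q" "lead_coeff (q - g) = lead_coeff q"
    by simp_all
qed

lemma top_coeff_notin_power:
  fixes h g :: "'a::field poly"
  assumes "is_subfield F" "h \<in> poly_over F" "degree g \<le> r" "r < degree h"
    and "coeff g r \<notin> F" "of_nat n \<noteq> (0 :: 'a)"
  shows "top_coeff_notin F ((h + g) ^ n) ((n - 1) * degree h + r)"
proof -
  define d where "d = (n - 1) * degree h + r"
  define c where "c = of_nat n * lead_coeff h ^ (n - 1)"
  have hn: "coeff (h ^ n) i \<in> F" for i
    using poly_over_power[OF assms(1,2)] by (simp add: poly_over_def)
  have c: "c \<in> F" "c \<noteq> 0"
    using assms by (auto simp: c_def poly_over_def subfield_of_nat subfield_mult subfield_power)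
  have split: "coeff ((h + g) ^ n) i = coeff (h ^ n) i + coeff ((h + g) ^ n - h ^ n) i" for i
    by simp
  have "coeff ((h + g) ^ n) d \<notin> F"
  proof
    assume "coeff ((h + g) ^ n) d \<in> F"
    then have "c * coeff g r \<in> F"
      using split[of d] power_add_minus_power(2)[OF assms(3,4), of n] hn[of d]
        subfield_diff[OF assms(1)]
      by (force simp: d_def c_def)
    then show False
      using subfield_mult_cancel_left[OF assms(1) c] assms(5) by blast
  qed
  moreover have "coeff ((h + g) ^ n) i \<in> F" if "d < i" for i
  proof -
    have "coeff ((h + g) ^ n - h ^ n) i = 0"
      using power_add_minus_power(1)[OF assms(3,4), of n] that
      by (intro coeff_eq_0) (simp add: d_def)
    then show ?thesis
      using hn[of i] by simp
  qed
  ultimately show ?thesis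
    by (simp add: top_coeff_notin_def d_def)
qed

lemma top_coeff_notin_pcompose:
  fixes p q :: "'a::field poly"
  assumes "is_subfield F" "lead_coeff p \<in> F" "p \<noteq> 0"
    and "(degree p - 1) * degree q < d" "top_coeff_notin F (q ^ degree p) d"
  shows "top_coeff_notin F (pcompose p q) d"
  unfolding top_coeff_notin_def
proof (intro conjI allI impI)
  have coeff_eq: "coeff (pcompose p q) i = lead_coeff p * coeff (q ^ degree p) i" if "d \<le> i" for i
    using assms(4) that by (intro coeff_pcompose_above) simp
  show "coeff (pcompose p q) d \<notin> F"
    using assms(3,5) subfield_mult_cancel_left[OF assms(1,2)] coeff_eq[of d]
    by (auto simp: top_coeff_notin_def)
  show "coeff (pcompose p q) i \<in> F" if "d < i" for i
    using assms(5) subfield_mult[OF assms(1,2)] coeff_eq[of i] that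
    by (simp add: top_coeff_notin_def)
qed

theorem theorem27:
  fixes F :: "'a::field set" and p q :: "'a poly"
  assumes "is_subfield F" and "F \<noteq> UNIV"
    and "degree p \<ge> 1"
    and "q \<notin> poly_over F"
    and "lead_coeff p \<in> F" and "lead_coeff q \<in> F"
    and "\<exists>j\<ge>1. coeff q j \<notin> F"
    and "\<not> CHAR('a) dvd degree p"
  shows "pcompose p q \<notin> poly_over F \<and> deficit F (pcompose p q) = deficit F q"
proof -
  define n m where "n = degree p" and "m = degree q"
  have F0: "0 \<in> F"
    using assms(1) by (rule subfield_zero)
  obtain r where r: "top_coeff_notin F q r"
    using top_coeff_notin_exists[OF F0 assms(4)] .
  then have "1 \<le> r"
    using assms(7) by (meson top_coeff_notin_def le_trans not_le)
  have "r < m"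
    using top_coeff_notin_le_degree[OF F0 r] assms(6) r
    by (metis le_neq_implies_less m_def top_coeff_notin_def)
  then obtain h g where hg: "q = h + g" "h \<in> poly_over F" "degree h = m"
    "lead_coeff h = lead_coeff q" "degree g \<le> r" "coeff g r = coeff q r"
    using poly_split_over_plus_low[OF F0, of r q] r by (auto simp: m_def top_coeff_notin_def)
  have "of_nat n \<noteq> (0 :: 'a)"
    using assms(8) by (simp add: n_def of_nat_eq_0_iff_char_dvd)
  moreover have "coeff g r \<notin> F"
    using hg(6) r by (simp add: top_coeff_notin_def)
  ultimately have "top_coeff_notin F ((h + g) ^ n) ((n - 1) * degree h + r)"
    using top_coeff_notin_power[OF assms(1) hg(2,5)] hg(3) \<open>r < m\<close> by simp
  then have "top_coeff_notin F (q ^ n) ((n - 1) * m + r)"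
    by (simp only: hg(1,3))
  then have "top_coeff_notin F (pcompose p q) ((n - 1) * m + r)"
    using \<open>1 \<le> r\<close> assms(3)
    by (intro top_coeff_notin_pcompose[OF assms(1,5)]) (auto simp: n_def m_def)
  moreover have "n * m - ((n - 1) * m + r) = m - r"
    using assms(3) \<open>r < m\<close> by (cases n) (simp_all add: n_def)
  ultimately show ?thesis
    using deficit_eq_if_top_coeff_notin[OF F0] r by (simp add: degree_pcompose n_def m_def)
qed

end
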